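(* Let $m\ge 2$ and let $C_1,\dots,C_m\subset\mathbb{R}^n$ be nonempty, closed, convex, pairwise disjoint sets, and assume either all $C_i$ are bounded, or for every $j$ with $C_j$ unbounded and every sequence $(a^{(k)})\subset C_j$ with $\|a^{(k)}\|\to\infty$, at least one of $d_{C_{j-1}}(a^{(k)})\to\infty$, $d_{C_{j+1}}(a^{(k)})\to\infty$ holds (cyclic indices). Let $D(a)=\sum_{i=1}^m\|a_i-a_{i+1}\|$ ($a_{m+1}=a_1$). Let $a_i^{(0)}\in C_i$ and let $(\alpha_k)$ be positive step sizes with $\sum_k\alpha_k=\infty$ and $\sum_k\alpha_k^2<\infty$. Define iteratively, for $i=1,\dots,m$, $$g_i^{(k)}=\frac{a_i^{(k)}-a_{i-1}^{(k)}}{\|a_i^{(k)}-a_{i-1}^{(k)}\|}+\frac{a_i^{(k)}-a_{i+1}^{(k)}}{\|a_i^{(k)}-a_{i+1}^{(k)}\|},\qquad a_i^{(k+1)}=\operatorname{proj}_{C_i}\big(a_i^{(k)}-\alpha_k g_i^{(k)}\big),$$ with cyclic indices $a_0^{(k)}=a_m^{(k)}$, $a_{m+1}^{(k)}=a_1^{(k)}$. Then the sequence $(a_1^{(k)},\dots,a_m^{(k)})$ converges to an optimal solution $(a_1^*,\dots,a_m^* )$ of $\min_{a\in C_1\times\cdots\times C_m}D(a)$, and $D(a_1^{(k)},\dots,a_m^{(k)})$ converges to the optimal value $D^*=\min_{a\in C}D(a)$.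
   Context: $\operatorname{proj}_K(x)$ denotes the (unique) Euclidean projection of $x$ onto a nonempty closed convex set $K$, i.e. the point of $K$ nearest to $x$. $d_K(x)=\inf_{y\in K}\|x-y\|$. The vector $g_i^{(k)}$ is well defined because consecutive iterates lie in disjoint sets. *)

theory Defs
  imports "HOL-Analysis.Analysis"
begin

text \<open>Sets and points are indexed by 0..m-1 (the paper uses 1..m); cyclic neighbours.\<close>

definition cprev :: "nat \<Rightarrow> nat \<Rightarrow> nat" where
  "cprev m i = (i + m - 1) mod m"

definition cnext :: "nat \<Rightarrow> nat \<Rightarrow> nat" where
  "cnext m i = (i + 1) mod m"

definition perim :: "nat \<Rightarrow> (nat \<Rightarrow> real ^ 'n) \<Rightarrow> real" where
  "perim m a = (\<Sum>i<m. norm (a i - a (cnext m i)))"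

definition gdir :: "nat \<Rightarrow> (nat \<Rightarrow> real ^ 'n) \<Rightarrow> nat \<Rightarrow> real ^ 'n" where
  "gdir m a i =
     (1 / norm (a i - a (cprev m i))) *\<^sub>R (a i - a (cprev m i)) +
     (1 / norm (a i - a (cnext m i))) *\<^sub>R (a i - a (cnext m i))"

end

theory Submission
  imports Defs
begin

(* The direction gdir m a is a subgradient of the convex function perim at a: with the
   convention 1 / 0 = 0 a vanishing edge contributes the zero vector, which is a subgradient
   of the norm at 0, so neither disjointness nor m >= 2 is needed.  Together with the
   nonexpansiveness of projections onto closed convex sets this gives, for every admissible
   configuration y, the Fejer-type inequality
     |a(k+1) - y|^2 <= |a(k) - y|^2 - 2 alpha_k (D(a(k)) - D(y)) + 4 m alpha_k^2.
   Coercivity makes sublevel sets of D bounded, so a minimiser exists.  For a minimiser y the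
   distances |a(k) - y| converge and sum_k alpha_k (D(a(k)) - min D) is finite; as sum_k alpha_k
   diverges, D(a(k)) -> min D along a subsequence, whose cluster point is again a minimiser.
   The distances to that minimiser converge and tend to 0 along the subsequence, hence
   the whole sequence converges to it. *)

section \<open>Cyclic configurations and the perimeter\<close>

lemma cnext_less: "0 < m \<Longrightarrow> cnext m i < m"
  by (simp add: cnext_def)

lemma cprev_less: "0 < m \<Longrightarrow> cprev m i < m"
  by (simp add: cprev_def)

lemma cnext_cprev: "i < m \<Longrightarrow> cnext m (cprev m i) = i"
proof -
  assume "i < m"
  then have "cnext m (cprev m i) = (i + m - 1 + 1) mod m"
    by (simp add: cnext_def cprev_def mod_Suc_eq)
  also have "\<dots> = i" using \<open>i < m\<close> by simp
  finally show ?thesis .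
qed

lemma cprev_cnext: "i < m \<Longrightarrow> cprev m (cnext m i) = i"
proof -
  assume "i < m"
  then have "cprev m (cnext m i) = ((i + 1) mod m + (m - 1)) mod m"
    unfolding cnext_def cprev_def by (metis Nat.add_diff_assoc One_nat_def Suc_leI gr_zeroI not_less0)
  also have "\<dots> = (i + 1 + (m - 1)) mod m" by (rule mod_add_left_eq)
  also have "\<dots> = (i + m) mod m" using \<open>i < m\<close> by simp
  also have "\<dots> = i" using \<open>i < m\<close> by simp
  finally show ?thesis .
qed

lemma bij_betw_cnext: "bij_betw (cnext m) {..<m} {..<m}"
  by (rule bij_betwI[where g = "cprev m"]) (auto simp: cnext_less cprev_less cnext_cprev cprev_cnext)

lemma sum_reindex_cnext: "(\<Sum>i<m. f (cnext m i)) = (\<Sum>i<m. f i)"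
  using sum.reindex_bij_betw[OF bij_betw_cnext] .

lemma norm_normalize_le: "norm ((1 / norm d) *\<^sub>R (d::'a::real_normed_vector)) \<le> 1"
  by (cases "d = 0") auto

lemma inner_normalize_self: "((1 / norm d) *\<^sub>R d) \<bullet> (d::'a::real_inner) = norm d"
  by (cases "d = 0") (auto simp: power2_norm_eq_inner[symmetric] power2_eq_square)

lemma norm_gdir_le: "norm (gdir m a i) \<le> 2"
proof -
  have "norm (gdir m a i) \<le> norm ((1 / norm (a i - a (cprev m i))) *\<^sub>R (a i - a (cprev m i)))
      + norm ((1 / norm (a i - a (cnext m i))) *\<^sub>R (a i - a (cnext m i)))"
    unfolding gdir_def by (rule norm_triangle_ineq)
  then show ?thesis
    using norm_normalize_le[of "a i - a (cprev m i)"] norm_normalize_le[of "a i - a (cnext m i)"]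
    by linarith
qed

lemma norm_diff_cnext_le_perim: "i < m \<Longrightarrow> norm (b i - b (cnext m i)) \<le> perim m b"
  unfolding perim_def by (rule member_le_sum) auto

lemma perim_nonneg: "0 \<le> perim m b"
  unfolding perim_def by (simp add: sum_nonneg)

lemma tendsto_perim:
  assumes "\<And>i. i < m \<Longrightarrow> (\<lambda>k. b k i) \<longlonglongrightarrow> l i"
  shows "(\<lambda>k. perim m (b k)) \<longlonglongrightarrow> perim m l"
  unfolding perim_def
  by (intro tendsto_sum tendsto_norm tendsto_diff) (auto intro!: assms cnext_less)

lemma gdir_subgradient:
  fixes a y :: "nat \<Rightarrow> real ^ 'n"
  shows "(\<Sum>i<m. gdir m a i \<bullet> (y i - a i)) \<le> perim m y - perim m a"
proof -
  define u where "u i = (1 / norm (a i - a (cnext m i))) *\<^sub>R (a i - a (cnext m i))" for i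
  define z where "z i = y i - a i" for i
  have gdir_eq: "gdir m a i = u i - u (cprev m i)" if "i < m" for i
  proof -
    have "u (cprev m i) = (1 / norm (a i - a (cprev m i))) *\<^sub>R (a (cprev m i) - a i)"
      by (simp add: u_def cnext_cprev[OF that] norm_minus_commute)
    then show ?thesis
      unfolding gdir_def by (simp add: u_def algebra_simps)
  qed
  have "(\<Sum>i<m. gdir m a i \<bullet> z i) = (\<Sum>i<m. u i \<bullet> z i) - (\<Sum>i<m. u (cprev m i) \<bullet> z i)"
    by (simp add: gdir_eq inner_diff_left sum_subtractf)
  also have "(\<Sum>i<m. u (cprev m i) \<bullet> z i) = (\<Sum>i<m. u i \<bullet> z (cnext m i))"
    by (subst sum_reindex_cnext[symmetric]) (simp add: cprev_cnext)
  also have "(\<Sum>i<m. u i \<bullet> z i) - (\<Sum>i<m. u i \<bullet> z (cnext m i))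
      = (\<Sum>i<m. u i \<bullet> (y i - y (cnext m i)) - u i \<bullet> (a i - a (cnext m i)))"
    by (simp add: z_def sum_subtractf[symmetric] algebra_simps)
  also have "\<dots> \<le> (\<Sum>i<m. norm (y i - y (cnext m i)) - norm (a i - a (cnext m i)))"
  proof (rule sum_mono)
    fix i
    have "u i \<bullet> (y i - y (cnext m i)) \<le> norm (u i) * norm (y i - y (cnext m i))"
      by (rule norm_cauchy_schwarz)
    also have "\<dots> \<le> norm (y i - y (cnext m i))"
      using norm_normalize_le unfolding u_def by (simp add: mult_left_le_one_le)
    finally show "u i \<bullet> (y i - y (cnext m i)) - u i \<bullet> (a i - a (cnext m i))
        \<le> norm (y i - y (cnext m i)) - norm (a i - a (cnext m i))"
      using inner_normalize_self[of "a i - a (cnext m i)"] unfolding u_def by simp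
  qed
  also have "\<dots> = perim m y - perim m a"
    by (simp add: perim_def sum_subtractf)
  finally show ?thesis
    by (simp add: z_def)
qed

lemma norm_closest_point_step_sq_le:
  fixes S :: "'a::euclidean_space set"
  assumes "closed S" "convex S" "z \<in> S"
  shows "(norm (closest_point S (p - t *\<^sub>R g) - z))\<^sup>2
    \<le> (norm (p - z))\<^sup>2 - 2 * t * (g \<bullet> (p - z)) + t\<^sup>2 * (norm g)\<^sup>2"
proof -
  have "dist (closest_point S (p - t *\<^sub>R g)) (closest_point S z) \<le> dist (p - t *\<^sub>R g) z"
    using assms by (intro closest_point_lipschitz) auto
  then have "norm (closest_point S (p - t *\<^sub>R g) - z) \<le> norm ((p - z) - t *\<^sub>R g)"
    using closest_point_self[OF assms(3)] by (simp add: dist_norm algebra_simps)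
  then have "(norm (closest_point S (p - t *\<^sub>R g) - z))\<^sup>2 \<le> (norm ((p - z) - t *\<^sub>R g))\<^sup>2"
    by (simp add: power_mono)
  also have "\<dots> = ((p - z) - t *\<^sub>R g) \<bullet> ((p - z) - t *\<^sub>R g)"
    by (rule power2_norm_eq_inner)
  also have "\<dots> = (p - z) \<bullet> (p - z) - 2 * t * (g \<bullet> (p - z)) + t\<^sup>2 * (g \<bullet> g)"
    by (simp add: inner_commute power2_eq_square algebra_simps)
  also have "\<dots> = (norm (p - z))\<^sup>2 - 2 * t * (g \<bullet> (p - z)) + t\<^sup>2 * (norm g)\<^sup>2"
    by (simp add: power2_norm_eq_inner)
  finally show ?thesis .
qed

definition sum_sq_dist :: "nat \<Rightarrow> (nat \<Rightarrow> 'a::real_normed_vector) \<Rightarrow> (nat \<Rightarrow> 'a) \<Rightarrow> real" where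
  "sum_sq_dist m x y = (\<Sum>i<m. (norm (x i - y i))\<^sup>2)"

lemma sum_sq_dist_nonneg: "0 \<le> sum_sq_dist m x y"
  unfolding sum_sq_dist_def by (simp add: sum_nonneg)

lemma sq_norm_diff_le_sum_sq_dist: "i < m \<Longrightarrow> (norm (x i - y i))\<^sup>2 \<le> sum_sq_dist m x y"
  unfolding sum_sq_dist_def by (rule member_le_sum) auto

lemma gdir_step_sum_sq_dist_le:
  fixes a a' y :: "nat \<Rightarrow> real ^ 'n"
  assumes closed: "\<And>i. i < m \<Longrightarrow> closed (C i)" and convex: "\<And>i. i < m \<Longrightarrow> convex (C i)"
    and y: "y \<in> Pi {..<m} C" and t: "0 \<le> t"
    and step: "\<And>i. i < m \<Longrightarrow> a' i = closest_point (C i) (a i - t *\<^sub>R gdir m a i)"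
  shows "sum_sq_dist m a' y \<le> sum_sq_dist m a y - 2 * t * (perim m a - perim m y) + 4 * real m * t\<^sup>2"
proof -
  have "(norm (a' i - y i))\<^sup>2 \<le> (norm (a i - y i))\<^sup>2 + 2 * t * (gdir m a i \<bullet> (y i - a i)) + 4 * t\<^sup>2"
    if i: "i < m" for i
  proof -
    have "(norm (gdir m a i))\<^sup>2 \<le> 2\<^sup>2"
      by (rule power_mono[OF norm_gdir_le]) simp
    from mult_right_mono[OF this zero_le_power2[of t]]
    have "t\<^sup>2 * (norm (gdir m a i))\<^sup>2 \<le> 4 * t\<^sup>2"
      by (simp add: mult.commute)
    moreover have "gdir m a i \<bullet> (a i - y i) = - (gdir m a i \<bullet> (y i - a i))"
      by (simp add: inner_diff_right)
    moreover have "y i \<in> C i"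
      using y i by auto
    ultimately show ?thesis
      using norm_closest_point_step_sq_le[of "C i" "y i" "a i" t "gdir m a i"] closed convex i
      by (simp add: step)
  qed
  then have "sum_sq_dist m a' y \<le> (\<Sum>i<m. (norm (a i - y i))\<^sup>2 + 2 * t * (gdir m a i \<bullet> (y i - a i)) + 4 * t\<^sup>2)"
    unfolding sum_sq_dist_def by (intro sum_mono) auto
  also have "\<dots> = sum_sq_dist m a y + 2 * t * (\<Sum>i<m. gdir m a i \<bullet> (y i - a i)) + 4 * real m * t\<^sup>2"
    by (simp add: sum_sq_dist_def sum.distrib sum_distrib_left)
  also have "\<dots> \<le> sum_sq_dist m a y + 2 * t * (perim m y - perim m a) + 4 * real m * t\<^sup>2"
    using gdir_subgradient[of m a y] t by (simp add: mult_left_mono)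
  finally show ?thesis
    by (simp add: algebra_simps)
qed

section \<open>Quasi-Fejer sequences\<close>

lemma quasi_fejer_summable_convergent:
  fixes u d \<beta> :: "nat \<Rightarrow> real"
  assumes u: "\<And>k. 0 \<le> u k" and d: "\<And>k. 0 \<le> d k"
    and \<beta>: "\<And>k. 0 \<le> \<beta> k" "summable \<beta>"
    and step: "\<And>k. u (Suc k) \<le> u k - d k + \<beta> k"
  shows "summable d" "convergent u"
proof -
  define w where "w k = u k + (\<Sum>j<k. d j) - (\<Sum>j<k. \<beta> j)" for k
  have partial_\<beta>: "(\<Sum>j<k. \<beta> j) \<le> suminf \<beta>" for k
    using \<beta> by (intro sum_le_suminf) auto
  have w_dec: "decseq w"
    unfolding w_def by (rule decseq_SucI) (use step in \<open>simp add: algebra_simps\<close>)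
  have w_lower: "- suminf \<beta> \<le> w k" for k
    using u[of k] sum_nonneg[of "{..<k}" d] d partial_\<beta>[of k] unfolding w_def by auto
  show "summable d"
  proof (rule summableI_nonneg_bounded)
    show "(\<Sum>j<k. d j) \<le> u 0 + suminf \<beta>" for k
      using w_dec[THEN decseqD, of 0 k] partial_\<beta>[of k] u[of k] unfolding w_def by simp
  qed (rule d)
  obtain L where "w \<longlonglongrightarrow> L"
    using decseq_convergent[OF w_dec] w_lower by blast
  then have "(\<lambda>k. w k - (\<Sum>j<k. d j) + (\<Sum>j<k. \<beta> j)) \<longlonglongrightarrow> L - suminf d + suminf \<beta>"
    by (intro tendsto_intros summable_LIMSEQ \<open>summable d\<close> \<beta>)
  then show "convergent u"
    unfolding w_def convergent_def by auto
qed

lemma summable_weighted_imp_subsequence_tendsto_0: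
  fixes \<alpha> e :: "nat \<Rightarrow> real"
  assumes \<alpha>: "\<And>k. 0 < \<alpha> k" "\<not> summable \<alpha>"
    and e: "\<And>k. 0 \<le> e k" and summable: "summable (\<lambda>k. \<alpha> k * e k)"
  shows "\<exists>r. (\<forall>j. j \<le> r j) \<and> (\<lambda>j. e (r j)) \<longlonglongrightarrow> 0"
proof -
  have small: "\<exists>k\<ge>N. e k < \<epsilon>" if "\<epsilon> > 0" for N \<epsilon>
  proof (rule ccontr)
    assume "\<not> ?thesis"
    then have "norm (\<alpha> k) \<le> \<alpha> k * e k / \<epsilon>" if "N \<le> k" for k
      using that \<alpha>(1)[of k] \<open>\<epsilon> > 0\<close> by (auto simp: pos_le_divide_eq not_less)
    then have "summable \<alpha>"
      by (rule summable_comparison_test'[OF summable_divide[OF summable]])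
    then show False
      using \<alpha>(2) by contradiction
  qed
  have "\<forall>j. \<exists>k. j \<le> k \<and> e k < inverse (real (Suc j))"
    using small by simp
  then obtain r where r: "\<And>j. j \<le> r j" "\<And>j. e (r j) < inverse (real (Suc j))"
    using choice[of "\<lambda>j k. j \<le> k \<and> e k < inverse (real (Suc j))"] by blast
  have "(\<lambda>j. e (r j)) \<longlonglongrightarrow> 0"
    by (rule tendsto_sandwich[OF _ _ tendsto_const LIMSEQ_inverse_real_of_nat])
      (use e r(2) in \<open>auto intro: always_eventually less_imp_le\<close>)
  with r(1) show ?thesis
    by blast
qed

lemma bounded_components_imp_convergent_subsequence:
  fixes x :: "nat \<Rightarrow> nat \<Rightarrow> 'a::heine_borel"
  assumes "\<And>i. i < m \<Longrightarrow> bounded (range (\<lambda>k. x k i))"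
  shows "\<exists>l r. strict_mono r \<and> (\<forall>i<m. (\<lambda>k. x (r k) i) \<longlonglongrightarrow> l i)"
  using assms
proof (induction m)
  case 0
  show ?case
    using strict_mono_id by blast
next
  case (Suc m)
  then obtain l r where r: "strict_mono r" and l: "\<forall>i<m. (\<lambda>k. x (r k) i) \<longlonglongrightarrow> l i"
    by auto
  have "bounded (range (\<lambda>k. x (r k) m))"
    by (rule bounded_subset[OF Suc.prems[of m]]) auto
  then obtain l' r' where r': "strict_mono r'" and l': "((\<lambda>k. x (r k) m) \<circ> r') \<longlonglongrightarrow> l'"
    using bounded_imp_convergent_subsequence by blast
  have "(\<lambda>k. x (r (r' k)) i) \<longlonglongrightarrow> (l(m := l')) i" if "i < Suc m" for i
  proof (cases "i = m")
    case True
    then show ?thesis using l' by (simp add: o_def)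
  next
    case False
    then have "((\<lambda>k. x (r k) i) \<circ> r') \<longlonglongrightarrow> l i"
      using l r' that by (intro LIMSEQ_subseq_LIMSEQ) auto
    then show ?thesis using False by (simp add: o_def)
  qed
  moreover have "strict_mono (\<lambda>k. r (r' k))"
    using strict_mono_o[OF r r'] by (simp add: comp_def)
  ultimately show ?case
    by (intro exI[of _ "l(m := l')"] exI[of _ "\<lambda>k. r (r' k)"]) auto
qed

lemma tendsto_sum_sq_dist:
  assumes "\<And>i. i < m \<Longrightarrow> (\<lambda>k. x k i) \<longlonglongrightarrow> l i"
  shows "(\<lambda>k. sum_sq_dist m (x k) y) \<longlonglongrightarrow> sum_sq_dist m l y"
  unfolding sum_sq_dist_def by (intro tendsto_intros) (use assms in auto)

lemma tendsto_component_of_sum_sq_dist: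
  assumes "(\<lambda>k. sum_sq_dist m (x k) l) \<longlonglongrightarrow> 0" and "i < m"
  shows "(\<lambda>k. x k i) \<longlonglongrightarrow> l i"
proof -
  have "(\<lambda>k. (norm (x k i - l i))\<^sup>2) \<longlonglongrightarrow> 0"
    by (rule tendsto_sandwich[OF _ _ tendsto_const assms(1)])
      (simp_all add: sq_norm_diff_le_sum_sq_dist[OF assms(2)])
  then have "(\<lambda>k. norm (x k i - l i)) \<longlonglongrightarrow> 0"
    using tendsto_real_sqrt by fastforce
  then show ?thesis
    by (simp add: LIM_zero_cancel tendsto_norm_zero_iff)
qed

lemma bounded_component_of_sum_sq_dist_le:
  assumes "\<And>k. sum_sq_dist m (x k) y \<le> K" and "i < m"
  shows "bounded (range (\<lambda>k. x k i))"
proof -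
  have "norm (x k i - y i) \<le> sqrt K" for k
    using sq_norm_diff_le_sum_sq_dist[OF assms(2), of "x k" y] assms(1)[of k]
    by (auto intro: real_le_rsqrt)
  then have "dist (y i) (x k i) \<le> sqrt K" for k
    by (simp add: dist_norm norm_minus_commute)
  then show ?thesis
    unfolding bounded_def by (intro exI[of _ "y i"] exI[of _ "sqrt K"]) auto
qed

lemma tendsto_in_Pi_closed:
  assumes "\<And>i. i < m \<Longrightarrow> closed (C i)" and "\<And>k. x k \<in> Pi {..<m} C"
    and "\<And>i. i < m \<Longrightarrow> (\<lambda>k. x k i) \<longlonglongrightarrow> l i"
  shows "l \<in> Pi {..<m} C"
proof (rule Pi_I)
  fix i assume "i \<in> {..<m}"
  then have i: "i < m" by simp
  show "l i \<in> C i"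
  proof (rule closed_sequentially[OF assms(1)[OF i] _ assms(3)[OF i]])
    show "x k i \<in> C i" for k
      using assms(2)[of k] i by (simp add: Pi_iff)
  qed
qed

lemma fejer_cluster_point_imp_tendsto:
  assumes fejer: "convergent (\<lambda>k. sum_sq_dist m (x k) l)"
    and q: "filterlim q sequentially sequentially"
    and cluster: "\<And>i. i < m \<Longrightarrow> (\<lambda>j. x (q j) i) \<longlonglongrightarrow> l i"
    and i: "i < m"
  shows "(\<lambda>k. x k i) \<longlonglongrightarrow> l i"
proof -
  obtain L where L: "(\<lambda>k. sum_sq_dist m (x k) l) \<longlonglongrightarrow> L"
    using fejer unfolding convergent_def by blast
  have "(\<lambda>j. sum_sq_dist m (x (q j)) l) \<longlonglongrightarrow> L"
    by (rule filterlim_compose[OF L q])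
  moreover have "(\<lambda>j. sum_sq_dist m (x (q j)) l) \<longlonglongrightarrow> sum_sq_dist m l l"
    by (rule tendsto_sum_sq_dist[OF cluster])
  ultimately have "L = 0"
    using LIMSEQ_unique by (fastforce simp: sum_sq_dist_def)
  with L show ?thesis
    using tendsto_component_of_sum_sq_dist i by blast
qed

lemma descent_summable_convergent:
  fixes x :: "nat \<Rightarrow> nat \<Rightarrow> 'a::real_normed_vector" and f :: "(nat \<Rightarrow> 'a) \<Rightarrow> real"
  assumes \<alpha>: "\<And>k. 0 < \<alpha> k" "summable (\<lambda>k. (\<alpha> k)\<^sup>2)" and c: "0 \<le> c"
    and y: "\<And>k. f y \<le> f (x k)"
    and descent: "\<And>k. sum_sq_dist m (x (Suc k)) y
      \<le> sum_sq_dist m (x k) y - 2 * \<alpha> k * (f (x k) - f y) + c * (\<alpha> k)\<^sup>2"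
  shows "summable (\<lambda>k. \<alpha> k * (f (x k) - f y))" "convergent (\<lambda>k. sum_sq_dist m (x k) y)"
proof -
  have d: "0 \<le> 2 * \<alpha> k * (f (x k) - f y)" and \<beta>: "0 \<le> c * (\<alpha> k)\<^sup>2" for k
    using \<alpha>(1)[of k] y[of k] c by simp_all
  note quasi_fejer = quasi_fejer_summable_convergent[of "\<lambda>k. sum_sq_dist m (x k) y",
      OF sum_sq_dist_nonneg d \<beta> summable_mult[OF \<alpha>(2)] descent]
  show "summable (\<lambda>k. \<alpha> k * (f (x k) - f y))"
    using summable_mult[OF quasi_fejer(1), of "1 / 2"] by simp
  show "convergent (\<lambda>k. sum_sq_dist m (x k) y)"
    by (fact quasi_fejer(2))
qed

lemma fejer_descent_tendsto_minimizer:
  fixes f :: "(nat \<Rightarrow> 'a::euclidean_space) \<Rightarrow> real" and x :: "nat \<Rightarrow> nat \<Rightarrow> 'a"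
  assumes closed: "\<And>i. i < m \<Longrightarrow> closed (C i)"
    and cont: "\<And>y l. (\<And>i. i < m \<Longrightarrow> (\<lambda>k. y k i) \<longlonglongrightarrow> l i) \<Longrightarrow> (\<lambda>k. f (y k)) \<longlonglongrightarrow> f l"
    and z: "z \<in> Pi {..<m} C" "\<And>b. b \<in> Pi {..<m} C \<Longrightarrow> f z \<le> f b"
    and x: "\<And>k. x k \<in> Pi {..<m} C"
    and \<alpha>: "\<And>k. 0 < \<alpha> k" "\<not> summable \<alpha>" "summable (\<lambda>k. (\<alpha> k)\<^sup>2)"
    and c: "0 \<le> c"
    and descent: "\<And>y k. y \<in> Pi {..<m} C \<Longrightarrow> f y = f z \<Longrightarrow>
      sum_sq_dist m (x (Suc k)) y \<le> sum_sq_dist m (x k) y - 2 * \<alpha> k * (f (x k) - f y) + c * (\<alpha> k)\<^sup>2"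
  shows "\<exists>l\<in>Pi {..<m} C. f l = f z \<and> (\<forall>i<m. (\<lambda>k. x k i) \<longlonglongrightarrow> l i)"
proof -
  have gap_nonneg: "0 \<le> f (x k) - f z" for k
    using z(2)[OF x] by simp
  have fejer: "summable (\<lambda>k. \<alpha> k * (f (x k) - f y)) \<and> convergent (\<lambda>k. sum_sq_dist m (x k) y)"
    if "y \<in> Pi {..<m} C" "f y = f z" for y
  proof -
    have "f y \<le> f (x k)" for k
      using gap_nonneg[of k] that(2) by simp
    from descent_summable_convergent[OF \<alpha>(1,3) c this descent[OF that]] show ?thesis ..
  qed
  obtain r where r: "\<And>j. j \<le> r j" and gap: "(\<lambda>j. f (x (r j)) - f z) \<longlonglongrightarrow> 0"
    using summable_weighted_imp_subsequence_tendsto_0[OF \<alpha>(1,2) gap_nonneg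
        fejer[OF z(1) refl, THEN conjunct1]] by blast
  obtain K where K: "\<And>k. sum_sq_dist m (x k) z \<le> K"
    using convergent_imp_Bseq[OF fejer[OF z(1) refl, THEN conjunct2]] by (auto simp: Bseq_def abs_le_iff)
  have "bounded (range (\<lambda>j. x (r j) i))" if "i < m" for i
    by (rule bounded_subset[OF bounded_component_of_sum_sq_dist_le[OF K that]]) auto
  then obtain l r' where r': "strict_mono r'" and l: "\<forall>i<m. (\<lambda>j. x (r (r' j)) i) \<longlonglongrightarrow> l i"
    using bounded_components_imp_convergent_subsequence[of m "\<lambda>j. x (r j)"] by blast
  have "j \<le> r (r' j)" for j
    using r[of "r' j"] seq_suble[OF r', of j] by linarith
  then have q: "filterlim (\<lambda>j. r (r' j)) sequentially sequentially"
    by (intro filterlim_at_top_mono[OF filterlim_ident] always_eventually) auto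
  have l_in: "l \<in> Pi {..<m} C"
    by (rule tendsto_in_Pi_closed[OF closed x]) (use l in auto)
  have "(\<lambda>j. f (x (r (r' j)))) \<longlonglongrightarrow> f l"
    by (rule cont) (use l in auto)
  moreover have "(\<lambda>j. f (x (r (r' j)))) \<longlonglongrightarrow> f z"
    using tendsto_add[OF tendsto_const[of "f z"] LIMSEQ_subseq_LIMSEQ[OF gap r']] by (simp add: o_def)
  ultimately have "f l = f z"
    by (rule LIMSEQ_unique)
  moreover have "(\<lambda>k. x k i) \<longlonglongrightarrow> l i" if "i < m" for i
    using fejer_cluster_point_imp_tendsto[OF fejer[OF l_in \<open>f l = f z\<close>, THEN conjunct2] q] l that
    by blast
  ultimately show ?thesis
    using l_in by blast
qed

lemma gdir_iteration_tendsto_minimizer: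
  fixes a :: "nat \<Rightarrow> nat \<Rightarrow> real ^ 'n"
  assumes closed: "\<And>i. i < m \<Longrightarrow> closed (C i)" and convex: "\<And>i. i < m \<Longrightarrow> convex (C i)"
    and z: "z \<in> Pi {..<m} C" "\<And>b. b \<in> Pi {..<m} C \<Longrightarrow> perim m z \<le> perim m b"
    and a: "\<And>k. a k \<in> Pi {..<m} C"
    and \<alpha>: "\<And>k. 0 < \<alpha> k" "\<not> summable \<alpha>" "summable (\<lambda>k. (\<alpha> k)\<^sup>2)"
    and iter: "\<And>k i. i < m \<Longrightarrow> a (Suc k) i = closest_point (C i) (a k i - \<alpha> k *\<^sub>R gdir m (a k) i)"
  shows "\<exists>l\<in>Pi {..<m} C. perim m l = perim m z \<and> (\<forall>i<m. (\<lambda>k. a k i) \<longlonglongrightarrow> l i)"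
proof (rule fejer_descent_tendsto_minimizer[where f = "perim m" and c = "4 * real m",
      OF closed _ z a \<alpha>])
  show "(\<lambda>k. perim m (y k)) \<longlonglongrightarrow> perim m l" if "\<And>i. i < m \<Longrightarrow> (\<lambda>k. y k i) \<longlonglongrightarrow> l i" for y l
    using that by (rule tendsto_perim)
  show "sum_sq_dist m (a (Suc k)) y
    \<le> sum_sq_dist m (a k) y - 2 * \<alpha> k * (perim m (a k) - perim m y) + 4 * real m * (\<alpha> k)\<^sup>2"
    if "y \<in> Pi {..<m} C" for y k
    using \<alpha>(1)[of k] by (intro gdir_step_sum_sq_dist_le[OF closed convex that] iter) simp_all
qed auto

section \<open>Existence of a minimiser\<close>

lemma attains_min_if_sublevel_bounded:
  fixes f :: "(nat \<Rightarrow> 'a::heine_borel) \<Rightarrow> real"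
  assumes closed: "\<And>i. i < m \<Longrightarrow> closed (C i)"
    and nonempty: "Pi {..<m} C \<noteq> {}" and bdd: "bdd_below (f ` Pi {..<m} C)"
    and cont: "\<And>y l. (\<And>i. i < m \<Longrightarrow> (\<lambda>k. y k i) \<longlonglongrightarrow> l i) \<Longrightarrow> (\<lambda>k. f (y k)) \<longlonglongrightarrow> f l"
    and sublevel: "\<And>(b :: nat \<Rightarrow> nat \<Rightarrow> 'a) B i. (\<And>k. b k \<in> Pi {..<m} C) \<Longrightarrow>
      (\<And>k. f (b k) \<le> B) \<Longrightarrow> i < m \<Longrightarrow> bounded (range (\<lambda>k. b k i))"
  shows "\<exists>z\<in>Pi {..<m} C. \<forall>b\<in>Pi {..<m} C. f z \<le> f b"
proof -
  let ?S = "Pi {..<m} C"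
  have "Inf (f ` ?S) \<in> closure (f ` ?S)"
    by (intro closure_contains_Inf) (use nonempty bdd in auto)
  then obtain v where v: "\<And>k. v k \<in> f ` ?S" and v_lim: "v \<longlonglongrightarrow> Inf (f ` ?S)"
    unfolding closure_sequential by blast
  then have "\<forall>k. \<exists>y. y \<in> ?S \<and> f y = v k"
    by (metis imageE)
  then obtain b where b: "\<And>k. b k \<in> ?S" and fb: "\<And>k. f (b k) = v k"
    using choice[of "\<lambda>k y. y \<in> ?S \<and> f y = v k"] by blast
  obtain B where B: "\<And>k. f (b k) \<le> B"
    using convergent_imp_Bseq[OF convergentI[OF v_lim]] unfolding fb Bseq_def
    by (auto simp: abs_le_iff)
  obtain z r where r: "strict_mono r" and z: "\<forall>i<m. (\<lambda>k. b (r k) i) \<longlonglongrightarrow> z i"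
    using bounded_components_imp_convergent_subsequence[of m b, OF sublevel[of b B, OF b B]] by blast
  have z_in: "z \<in> ?S"
    by (rule tendsto_in_Pi_closed[OF closed b]) (use z in auto)
  have "(\<lambda>k. f (b (r k))) \<longlonglongrightarrow> f z"
    by (rule cont) (use z in auto)
  moreover have "(\<lambda>k. f (b (r k))) \<longlonglongrightarrow> Inf (f ` ?S)"
    using LIMSEQ_subseq_LIMSEQ[OF v_lim r] by (simp add: fb o_def)
  ultimately have "f z = Inf (f ` ?S)"
    by (rule LIMSEQ_unique)
  then have "f z \<le> f y" if "y \<in> ?S" for y
    using cINF_lower[OF bdd that] by simp
  then show ?thesis
    using z_in by blast
qed

definition cyclically_coercive :: "nat \<Rightarrow> (nat \<Rightarrow> 'a::real_normed_vector set) \<Rightarrow> bool" where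
  "cyclically_coercive m C \<longleftrightarrow>
    (\<forall>j<m. \<not> bounded (C j) \<longrightarrow>
      (\<forall>s. (\<forall>k. s k \<in> C j) \<and> filterlim (\<lambda>k. norm (s k)) at_top sequentially \<longrightarrow>
        filterlim (\<lambda>k. infdist (s k) (C (cprev m j))) at_top sequentially \<or>
        filterlim (\<lambda>k. infdist (s k) (C (cnext m j))) at_top sequentially))"

lemma infdist_cprev_le_perim:
  assumes "b \<in> Pi {..<m} C" "j < m"
  shows "infdist (b j) (C (cprev m j)) \<le> perim m b"
proof -
  have "infdist (b j) (C (cprev m j)) \<le> dist (b j) (b (cprev m j))"
    using assms cprev_less[of m j] by (intro infdist_le) auto
  also have "\<dots> = norm (b (cprev m j) - b (cnext m (cprev m j)))"
    using assms(2) by (simp add: cnext_cprev dist_norm norm_minus_commute)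
  also have "\<dots> \<le> perim m b"
    using assms(2) by (intro norm_diff_cnext_le_perim cprev_less) simp
  finally show ?thesis .
qed

lemma infdist_cnext_le_perim:
  assumes "b \<in> Pi {..<m} C" "j < m"
  shows "infdist (b j) (C (cnext m j)) \<le> perim m b"
proof -
  have "infdist (b j) (C (cnext m j)) \<le> dist (b j) (b (cnext m j))"
    using assms cnext_less[of m j] by (intro infdist_le) auto
  also have "\<dots> \<le> perim m b"
    using norm_diff_cnext_le_perim[OF assms(2)] by (simp add: dist_norm)
  finally show ?thesis .
qed

lemma unbounded_imp_norm_subsequence_at_top:
  fixes s :: "nat \<Rightarrow> 'a::real_normed_vector"
  assumes "\<not> bounded (range s)"
  shows "\<exists>q. filterlim (\<lambda>N. norm (s (q N))) at_top sequentially"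
proof -
  have "\<forall>N. \<exists>k. real N \<le> norm (s k)"
  proof (rule ccontr)
    assume "\<not> ?thesis"
    then obtain N where "\<forall>k. norm (s k) < real N"
      by (auto simp: not_le)
    then have "\<forall>x\<in>range s. norm x \<le> real N"
      by (auto simp: less_imp_le)
    with assms show False
      unfolding bounded_iff by blast
  qed
  then obtain q where "\<And>N. real N \<le> norm (s (q N))"
    using choice[of "\<lambda>N k. real N \<le> norm (s k)"] by blast
  then have "filterlim (\<lambda>N. norm (s (q N))) at_top sequentially"
    by (intro filterlim_at_top_mono[OF filterlim_real_sequentially]) auto
  then show ?thesis
    by blast
qed

lemma not_filterlim_at_top_if_bounded:
  fixes g :: "nat \<Rightarrow> real"
  assumes "\<And>k. g k \<le> B"
  shows "\<not> filterlim g at_top sequentially"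
proof
  assume "filterlim g at_top sequentially"
  then have "eventually (\<lambda>k. B < g k) sequentially"
    by (simp add: filterlim_at_top_dense)
  then obtain k where "B < g k"
    by (auto simp: eventually_sequentially)
  with assms[of k] show False
    by simp
qed

lemma perim_sublevel_bounded:
  fixes b :: "nat \<Rightarrow> nat \<Rightarrow> real ^ 'n"
  assumes coercive: "cyclically_coercive m C"
    and b: "\<And>k. b k \<in> Pi {..<m} C" and B: "\<And>k. perim m (b k) \<le> B" and j: "j < m"
  shows "bounded (range (\<lambda>k. b k j))"
proof (rule ccontr)
  assume unbounded: "\<not> bounded (range (\<lambda>k. b k j))"
  then obtain q where q: "filterlim (\<lambda>N. norm (b (q N) j)) at_top sequentially"
    using unbounded_imp_norm_subsequence_at_top[of "\<lambda>k. b k j", OF unbounded] by blast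
  have "range (\<lambda>k. b k j) \<subseteq> C j"
    using b j by auto
  then have "\<not> bounded (C j)"
    using unbounded bounded_subset by blast
  then have "filterlim (\<lambda>N. infdist (b (q N) j) (C (cprev m j))) at_top sequentially \<or>
      filterlim (\<lambda>N. infdist (b (q N) j) (C (cnext m j))) at_top sequentially"
    using coercive j q b unfolding cyclically_coercive_def by (auto simp: Pi_iff)
  moreover have "infdist (b (q N) j) (C (cprev m j)) \<le> B" "infdist (b (q N) j) (C (cnext m j)) \<le> B" for N
    by (rule order_trans[OF infdist_cprev_le_perim[OF b j] B],
        rule order_trans[OF infdist_cnext_le_perim[OF b j] B])
  ultimately show False
    using not_filterlim_at_top_if_bounded[of "\<lambda>N. infdist (b (q N) j) (C (cprev m j))" B]
      not_filterlim_at_top_if_bounded[of "\<lambda>N. infdist (b (q N) j) (C (cnext m j))" B] by blast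
qed

lemma perim_attains_min:
  fixes C :: "nat \<Rightarrow> (real ^ 'n) set"
  assumes closed: "\<And>i. i < m \<Longrightarrow> closed (C i)" and nonempty: "Pi {..<m} C \<noteq> {}"
    and coercive: "cyclically_coercive m C"
  shows "\<exists>z\<in>Pi {..<m} C. \<forall>b\<in>Pi {..<m} C. perim m z \<le> perim m b"
proof (rule attains_min_if_sublevel_bounded[OF closed nonempty])
  show "bdd_below (perim m ` Pi {..<m} C)"
    by (rule bdd_belowI2[of _ 0]) (rule perim_nonneg)
  show "(\<lambda>k. perim m (y k)) \<longlonglongrightarrow> perim m l" if "\<And>i. i < m \<Longrightarrow> (\<lambda>k. y k i) \<longlonglongrightarrow> l i" for y l
    using that by (rule tendsto_perim)
  show "bounded (range (\<lambda>k. b k i))"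
    if "\<And>k. b k \<in> Pi {..<m} C" "\<And>k. perim m (b k) \<le> B" "i < m"
    for b :: "nat \<Rightarrow> nat \<Rightarrow> real ^ 'n" and B i
    by (rule perim_sublevel_bounded[OF coercive that])
qed

theorem mainTheorem6:
  fixes m :: nat
    and C :: "nat \<Rightarrow> (real ^ 'n) set"
    and \<alpha> :: "nat \<Rightarrow> real"
    and a :: "nat \<Rightarrow> nat \<Rightarrow> real ^ 'n"
  assumes m2: "m \<ge> 2"
    and nonempty: "\<forall>i<m. C i \<noteq> {}"
    and closed: "\<forall>i<m. closed (C i)"
    and convex: "\<forall>i<m. convex (C i)"
    and disjoint: "\<forall>i<m. \<forall>j<m. i \<noteq> j \<longrightarrow> C i \<inter> C j = {}"
    and growth: "(\<forall>i<m. bounded (C i)) \<or>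
       (\<forall>j<m. \<not> bounded (C j) \<longrightarrow>
          (\<forall>s :: nat \<Rightarrow> real ^ 'n. (\<forall>k. s k \<in> C j) \<and>
              filterlim (\<lambda>k. norm (s k)) at_top sequentially \<longrightarrow>
              filterlim (\<lambda>k. infdist (s k) (C (cprev m j))) at_top sequentially \<or>
              filterlim (\<lambda>k. infdist (s k) (C (cnext m j))) at_top sequentially))"
    and init: "\<forall>i<m. a 0 i \<in> C i"
    and step_pos: "\<forall>k. \<alpha> k > 0"
    and step_div: "\<not> summable \<alpha>"
    and step_sq: "summable (\<lambda>k. (\<alpha> k)\<^sup>2)"
    and iter: "\<forall>k. \<forall>i<m.
       a (Suc k) i = closest_point (C i) (a k i - \<alpha> k *\<^sub>R gdir m (a k) i)"
  shows "\<exists>astar :: nat \<Rightarrow> real ^ 'n.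
     (\<forall>i<m. astar i \<in> C i) \<and>
     (\<forall>b. (\<forall>i<m. b i \<in> C i) \<longrightarrow> perim m astar \<le> perim m b) \<and>
     (\<forall>i<m. (\<lambda>k. a k i) \<longlonglongrightarrow> astar i) \<and>
     perim m astar = (INF b\<in>{b. \<forall>i<m. b i \<in> C i}. perim m b) \<and>
     (\<lambda>k. perim m (a k)) \<longlonglongrightarrow> perim m astar"
proof -
  have S_eq: "{b. \<forall>i<m. b i \<in> C i} = Pi {..<m} C"
    by (auto simp: Pi_iff)
  have iterates: "a k \<in> Pi {..<m} C" for k
    using init iter closed nonempty by (induction k) (auto intro!: closest_point_in_set)
  have coercive: "cyclically_coercive m C"
    using growth unfolding cyclically_coercive_def by blast
  have "Pi {..<m} C \<noteq> {}"
    using iterates by blast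
  then obtain z where z: "z \<in> Pi {..<m} C" "\<And>b. b \<in> Pi {..<m} C \<Longrightarrow> perim m z \<le> perim m b"
    using perim_attains_min[OF closed[rule_format] _ coercive] by blast
  obtain l where l: "l \<in> Pi {..<m} C" "perim m l = perim m z" "\<forall>i<m. (\<lambda>k. a k i) \<longlonglongrightarrow> l i"
    using gdir_iteration_tendsto_minimizer[OF closed[rule_format] convex[rule_format] z iterates
        step_pos[rule_format] step_div step_sq iter[rule_format]] by blast
  have "perim m l = (INF b\<in>Pi {..<m} C. perim m b)"
    using l z by (intro cInf_eq_minimum[symmetric]) auto
  show ?thesis
  proof (intro exI conjI allI impI)
    show "l i \<in> C i" if "i < m" for i
      using l(1) that by auto
    show "perim m l \<le> perim m b" if "\<forall>i<m. b i \<in> C i" for b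
      using z(2)[of b] l(2) that by (auto simp: Pi_iff)
    show "(\<lambda>k. a k i) \<longlonglongrightarrow> l i" if "i < m" for i
      using l(3) that by blast
    show "perim m l = (INF b\<in>{b. \<forall>i<m. b i \<in> C i}. perim m b)"
      unfolding S_eq by fact
    show "(\<lambda>k. perim m (a k)) \<longlonglongrightarrow> perim m l"
      using l(3) by (intro tendsto_perim) auto
  qed
qed

end
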